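(* Write the Hilbert series of $R_{3,2}$ as $\frac{q(t)}{(1-t^2)(1-t^3)}$. Then $q(t)=1+t^4+t^5+t^6+t^8+t^9+t^{10}+\cdots$ (i.e., the coefficients of $t^0,\dots,t^{10}$ are $1,0,0,0,1,1,1,0,1,1,1$). Consequently $R_{3,2}$ is not Cohen--Macaulay.
   Context: $R_{3,2}$ is the subalgebra of $\mathbb{C}[x,y]$ generated by $P_i=3x^i+2y^i+(-3x-2y)^i$, $i\ge2$, graded by $\deg x=\deg y=1$. *)

theory Defs
  imports "HOL-Computational_Algebra.Polynomial"
          "HOL-Computational_Algebra.Formal_Power_Series"
          "HOL-Library.Extended_Nat"
begin

text \<open>C[x,y] is modelled as complex poly poly: polynomials in y whose coefficients
are polynomials in x.  The monomial x^j y^i is coeff (coeff p i) j.\<close>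

type_synonym bipoly = "complex poly poly"

definition X_var :: bipoly where "X_var = [:[:0, 1:]:]"
definition Y_var :: bipoly where "Y_var = [:0, 1:]"

definition cscale :: "complex \<Rightarrow> bipoly \<Rightarrow> bipoly" where
  "cscale c p = smult [:c:] p"

definition P32 :: "nat \<Rightarrow> bipoly" where
  "P32 i = 3 * X_var ^ i + 2 * Y_var ^ i + (- 3 * X_var - 2 * Y_var) ^ i"

inductive_set alg_gen :: "bipoly set \<Rightarrow> bipoly set" for G where
  const: "[:[:c:]:] \<in> alg_gen G"
| gen: "g \<in> G \<Longrightarrow> g \<in> alg_gen G"
| add: "a \<in> alg_gen G \<Longrightarrow> b \<in> alg_gen G \<Longrightarrow> a + b \<in> alg_gen G"
| mult: "a \<in> alg_gen G \<Longrightarrow> b \<in> alg_gen G \<Longrightarrow> a * b \<in> alg_gen G"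

definition R32 :: "bipoly set" where
  "R32 = alg_gen (P32 ` {2..})"

definition homog :: "nat \<Rightarrow> bipoly \<Rightarrow> bool" where
  "homog d p \<longleftrightarrow> (\<forall>i j. coeff (coeff p i) j \<noteq> 0 \<longrightarrow> i + j = d)"

definition graded_piece :: "bipoly set \<Rightarrow> nat \<Rightarrow> bipoly set" where
  "graded_piece A d = {p \<in> A. homog d p}"

definition hilbert_series :: "bipoly set \<Rightarrow> int fps" where
  "hilbert_series A = Abs_fps (\<lambda>d. int (vector_space.dim cscale (graded_piece A d)))"

definition ideal_in :: "bipoly set \<Rightarrow> bipoly set \<Rightarrow> bool" where
  "ideal_in A I \<longleftrightarrow> I \<subseteq> A \<and> 0 \<in> I \<and> (\<forall>a\<in>I. \<forall>b\<in>I. a + b \<in> I)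
      \<and> (\<forall>r\<in>A. \<forall>a\<in>I. r * a \<in> I)"

definition prime_in :: "bipoly set \<Rightarrow> bipoly set \<Rightarrow> bool" where
  "prime_in A P \<longleftrightarrow> ideal_in A P \<and> P \<noteq> A \<and>
      (\<forall>a\<in>A. \<forall>b\<in>A. a * b \<in> P \<longrightarrow> a \<in> P \<or> b \<in> P)"

definition krull_dim :: "bipoly set \<Rightarrow> enat" where
  "krull_dim A = Sup {enat n | n. \<exists>ch :: nat \<Rightarrow> bipoly set.
      (\<forall>i\<le>n. prime_in A (ch i)) \<and> (\<forall>i<n. ch i \<subset> ch (Suc i))}"

definition gen_ideal :: "bipoly set \<Rightarrow> bipoly list \<Rightarrow> bipoly set" where
  "gen_ideal A fs = {(\<Sum>i<length fs. r i * fs ! i) | r. \<forall>i. r i \<in> A}"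

definition irrelevant :: "bipoly set \<Rightarrow> bipoly set" where
  "irrelevant A = {p \<in> A. coeff (coeff p 0) 0 = 0}"

definition regular_seq :: "bipoly set \<Rightarrow> bipoly list \<Rightarrow> bool" where
  "regular_seq A fs \<longleftrightarrow> set fs \<subseteq> irrelevant A \<and> gen_ideal A fs \<noteq> A \<and>
     (\<forall>i<length fs. \<forall>a\<in>A. a * fs ! i \<in> gen_ideal A (take i fs)
                            \<longrightarrow> a \<in> gen_ideal A (take i fs))"

definition depth :: "bipoly set \<Rightarrow> enat" where
  "depth A = Sup {enat (length fs) | fs. regular_seq A fs}"

definition cohen_macaulay :: "bipoly set \<Rightarrow> bool" where
  "cohen_macaulay A \<longleftrightarrow> depth A = krull_dim A"

end

theory Submission
  imports Defs
begin

text \<open>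
  The degree-d piece of R is spanned by the products \<open>P\<^sub>i\<^sub>1 \<cdots> P\<^sub>i\<^sub>k\<close> with
  \<open>i\<^sub>1 + \<dots> + i\<^sub>k = d\<close>, so for \<open>d \<le> 10\<close> it suffices to exhibit a basis among these products:
  the products outside it reduce to it by eight explicit linear relations, and its independence
  is certified by combinations of evaluations at \<open>(1, t)\<close> forming a dual basis. This gives the
  dimensions 1, 0, 1, 1, 2, 2, 4, 3, 6, 6, 8 and hence the coefficients of q.

  For the second claim, the degree-7 form W satisfies
  \<open>W \<ell> = M\<^sub>4 \<ell>\<^sup>4 + M\<^sub>5 \<ell>\<^sup>3 + M\<^sub>6 \<ell>\<^sup>2 + M\<^sub>8\<close> with \<open>M\<^sub>k \<in> R\<close> for each of the three linear forms
  \<open>\<ell> \<in> {x, y, -3x - 2y}\<close>; weighting by 3, 2, 1 gives \<open>W P\<^sub>n\<^sub>+\<^sub>1 \<in> R\<close>, hence \<open>W R\<^sub>+ \<subseteq> R\<close>,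
  although \<open>W \<notin> R\<close>. If \<open>f\<^sub>1, f\<^sub>2\<close> were a regular sequence in \<open>R\<^sub>+\<close>, then
  \<open>(W f\<^sub>1) f\<^sub>2 = (W f\<^sub>2) f\<^sub>1 \<in> (f\<^sub>1)\<close> would give \<open>W f\<^sub>1 \<in> (f\<^sub>1)\<close>, i.e. \<open>W \<in> R\<close>. So the depth is
  at most 1, while the primes \<open>0 \<subset> R \<inter> y\<complex>[x,y] \<subset> R\<^sub>+\<close> show that the Krull dimension is at least 2.
\<close>

interpretation cs: vector_space cscale
proof
  fix a b :: complex and x y :: bipoly
  show "cscale a (x + y) = cscale a x + cscale a y" by (simp add: cscale_def smult_add_right)
  have "[:a + b:] = [:a:] + [:b:]" by simp
  then show "cscale (a + b) x = cscale a x + cscale b x" unfolding cscale_def by (metis smult_add_left)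
  show "cscale a (cscale b x) = cscale (a * b) x" by (simp add: cscale_def mult.commute)
  show "cscale 1 x = x" by (simp add: cscale_def one_pCons[symmetric])
qed

lemma span_map_in_span:
  assumes "x \<in> cs.span S"
    and "\<And>s. s \<in> S \<Longrightarrow> f s \<in> cs.span T"
    and add: "\<And>a b. f (a + b) = f a + f b"
    and scale: "\<And>c a. f (cscale c a) = cscale c (f a)"
  shows "f x \<in> cs.span T"
  using assms(1)
proof (induction rule: cs.span_induct_alt)
  case base
  have "f 0 = f 0 + f 0" using add[of 0 0] by simp
  then show ?case by (simp add: cs.span_zero)
next
  case (step c x y)
  then show ?case using assms(2) add scale by (simp add: cs.span_add cs.span_scale)
qed

lemma span_mult_left:
  assumes "x \<in> cs.span S" "\<And>s. s \<in> S \<Longrightarrow> c * s \<in> cs.span T"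
  shows "c * x \<in> cs.span T"
  by (rule span_map_in_span[where f = "\<lambda>x. c * x", OF assms])
     (simp_all add: distrib_left cscale_def mult_smult_right)

lemma span_mult_span:
  assumes "x \<in> cs.span S" "y \<in> cs.span T" "\<And>s t. s \<in> S \<Longrightarrow> t \<in> T \<Longrightarrow> s * t \<in> U"
  shows "x * y \<in> cs.span U"
proof (rule span_map_in_span[where f = "\<lambda>x. x * y", OF assms(1)])
  fix s assume "s \<in> S"
  then show "s * y \<in> cs.span U"
    using span_mult_left[OF assms(2)] assms(3) by (simp add: cs.span_base)
qed (simp_all add: distrib_right cscale_def mult_smult_left)

section \<open>Homogeneous polynomials\<close>

definition eval2 :: "bipoly \<Rightarrow> complex \<Rightarrow> complex \<Rightarrow> complex" where
  "eval2 p x y = poly (poly p [:y:]) x"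

lemma eval2_add [simp]: "eval2 (p + q) x y = eval2 p x y + eval2 q x y"
  and eval2_diff [simp]: "eval2 (p - q) x y = eval2 p x y - eval2 q x y"
  and eval2_minus [simp]: "eval2 (- p) x y = - eval2 p x y"
  and eval2_mult [simp]: "eval2 (p * q) x y = eval2 p x y * eval2 q x y"
  and eval2_power [simp]: "eval2 (p ^ n) x y = eval2 p x y ^ n"
  and eval2_numeral [simp]: "eval2 (numeral k) x y = numeral k"
  and eval2_one [simp]: "eval2 1 x y = 1"
  and eval2_zero [simp]: "eval2 0 x y = 0"
  and eval2_const [simp]: "eval2 [:[:c:]:] x y = c"
  and eval2_cscale [simp]: "eval2 (cscale c p) x y = c * eval2 p x y"
  and eval2_X [simp]: "eval2 X_var x y = x"
  and eval2_Y [simp]: "eval2 Y_var x y = y"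
  by (simp_all add: eval2_def poly_power cscale_def X_var_def Y_var_def)

lemma eval2_sum: "eval2 (sum f A) x y = (\<Sum>a\<in>A. eval2 (f a) x y)"
  by (induction A rule: infinite_finite_induct) auto

lemma eval2_y0: "eval2 p x 0 = poly (coeff p 0) x"
  by (simp add: eval2_def poly_0_coeff_0)

lemma eval2_P32 [simp]: "eval2 (P32 i) x y = 3 * x ^ i + 2 * y ^ i + (- 3 * x - 2 * y) ^ i"
  by (simp add: P32_def)

lemma homog_0 [simp]: "homog d 0"
  by (simp add: homog_def)

lemma homog_add: "homog d p \<Longrightarrow> homog d q \<Longrightarrow> homog d (p + q)"
  unfolding homog_def by (metis add.right_neutral coeff_add)

lemma homog_minus: "homog d p \<Longrightarrow> homog d (- p)"
  unfolding homog_def by simp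

lemma homog_diff: "homog d p \<Longrightarrow> homog d q \<Longrightarrow> homog d (p - q)"
  unfolding homog_def by (metis coeff_diff diff_self)

lemma homog_cscale: "homog d p \<Longrightarrow> homog d (cscale c p)"
  unfolding homog_def cscale_def by simp

lemma homog_mult:
  assumes "homog a p" "homog b q" "d = a + b"
  shows "homog d (p * q)"
  unfolding homog_def
proof (intro allI impI)
  fix n j
  assume nz: "coeff (coeff (p * q) n) j \<noteq> 0"
  have "coeff (coeff (p * q) n) j
      = (\<Sum>k\<le>n. \<Sum>l\<le>j. coeff (coeff p k) l * coeff (coeff q (n - k)) (j - l))"
    by (simp add: coeff_mult coeff_sum)
  then obtain k l where "k \<le> n" "l \<le> j"
    and "coeff (coeff p k) l * coeff (coeff q (n - k)) (j - l) \<noteq> 0"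
    using nz by (metis (no_types, lifting) atMost_iff sum.neutral)
  then have "k + l = a" "n - k + (j - l) = b"
    using assms(1,2) unfolding homog_def by auto
  then show "n + j = d" using \<open>k \<le> n\<close> \<open>l \<le> j\<close> assms(3) by linarith
qed

lemma homog_power: "homog a p \<Longrightarrow> d = n * a \<Longrightarrow> homog d (p ^ n)"
proof (induction n arbitrary: d)
  case 0
  then show ?case by (simp add: homog_def coeff_1)
next
  case (Suc n)
  then show ?case using homog_mult[OF Suc.prems(1) Suc.IH[OF Suc.prems(1) refl]] by simp
qed

lemma homog_const: "homog 0 [:[:c:]:]"
  by (simp add: homog_def coeff_pCons split: nat.splits)

lemma homog_numeral: "homog 0 (numeral n :: bipoly)"
  using homog_const[of "numeral n"] by (simp add: numeral_poly)

lemma homog_X: "homog 1 X_var"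
  by (simp add: homog_def X_var_def coeff_pCons split: nat.splits)

lemma homog_Y: "homog 1 Y_var"
  by (simp add: homog_def Y_var_def coeff_pCons split: nat.splits)

lemmas homog_intros =
  homog_add homog_diff homog_minus homog_mult homog_power homog_numeral homog_X homog_Y homog_const

lemma homog_P32: "homog i (P32 i)"
  unfolding P32_def by (rule homog_intros | simp)+

definition hcomp :: "nat \<Rightarrow> bipoly \<Rightarrow> bipoly" where
  "hcomp d p = (\<Sum>i\<le>d. monom (monom (coeff (coeff p i) (d - i)) (d - i)) i)"

lemma coeff_hcomp:
  "coeff (coeff (hcomp d p) i) j = (if i + j = d then coeff (coeff p i) j else 0)"
proof -
  have "coeff (coeff (hcomp d p) i) j
      = (\<Sum>k\<le>d. if k = i then (if d - k = j then coeff (coeff p k) (d - k) else 0) else 0)"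
    unfolding hcomp_def coeff_sum by (intro sum.cong) auto
  also have "\<dots> = (if i + j = d then coeff (coeff p i) j else 0)"
    by (auto simp: sum.delta)
  finally show ?thesis .
qed

lemma homog_hcomp: "homog d (hcomp d p)"
  unfolding homog_def coeff_hcomp by auto

lemma hcomp_homog: "homog e p \<Longrightarrow> hcomp d p = (if d = e then p else 0)"
  by (intro poly_eqI) (auto simp: coeff_hcomp homog_def)

lemma hcomp_add: "hcomp d (p + q) = hcomp d p + hcomp d q"
  by (intro poly_eqI) (simp add: coeff_hcomp)

lemma hcomp_sum: "hcomp d (sum f A) = (\<Sum>a\<in>A. hcomp d (f a))"
proof (induction A rule: infinite_finite_induct)
  case empty
  show ?case by (intro poly_eqI) (simp add: coeff_hcomp)
qed (auto simp: hcomp_add, intro poly_eqI, simp add: coeff_hcomp)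

lemma sum_hcomp:
  assumes "\<And>i j. coeff (coeff p i) j \<noteq> 0 \<Longrightarrow> i + j \<le> M"
  shows "p = (\<Sum>d\<le>M. hcomp d p)"
proof (intro poly_eqI)
  fix i j
  have "coeff (coeff (\<Sum>d\<le>M. hcomp d p) i) j
      = (\<Sum>d\<le>M. if d = i + j then coeff (coeff p i) j else 0)"
    unfolding coeff_sum coeff_hcomp by (intro sum.cong) auto
  also have "\<dots> = coeff (coeff p i) j"
    using assms[of i j] by (auto simp: sum.delta)
  finally show "coeff (coeff p i) j = coeff (coeff (\<Sum>d\<le>M. hcomp d p) i) j" by simp
qed

lemma total_degree_bounded: "\<exists>M. \<forall>i j. coeff (coeff p i) j \<noteq> 0 \<longrightarrow> i + j \<le> M"
proof -
  define M where "M = degree p + Max ((\<lambda>i. degree (coeff p i)) ` {..degree p})"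
  have "i + j \<le> M" if "coeff (coeff p i) j \<noteq> 0" for i j
  proof -
    have "i \<le> degree p" "j \<le> degree (coeff p i)"
      using that le_degree by (fastforce intro: le_degree)+
    moreover have "degree (coeff p i) \<le> Max ((\<lambda>i. degree (coeff p i)) ` {..degree p})"
      using \<open>i \<le> degree p\<close> by (intro Max_ge) auto
    ultimately show ?thesis unfolding M_def by linarith
  qed
  then show ?thesis by blast
qed

lemma hcomp_mult: "hcomp d (p * q) = (\<Sum>a\<le>d. hcomp a p * hcomp (d - a) q)"
proof -
  obtain Mp Mq where Mp: "\<forall>i j. coeff (coeff p i) j \<noteq> 0 \<longrightarrow> i + j \<le> Mp"
    and Mq: "\<forall>i j. coeff (coeff q i) j \<noteq> 0 \<longrightarrow> i + j \<le> Mq"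
    using total_degree_bounded by metis
  define M where "M = max (max Mp Mq) d"
  have "p * q = (\<Sum>a\<le>M. hcomp a p) * (\<Sum>b\<le>M. hcomp b q)"
    using sum_hcomp[of p M] sum_hcomp[of q M] Mp Mq unfolding M_def by fastforce
  also have "\<dots> = (\<Sum>a\<le>M. \<Sum>b\<le>M. hcomp a p * hcomp b q)"
    by (rule sum_product)
  finally have "hcomp d (p * q) = (\<Sum>a\<le>M. \<Sum>b\<le>M. hcomp d (hcomp a p * hcomp b q))"
    by (simp add: hcomp_sum)
  also have "\<dots> = (\<Sum>a\<le>M. \<Sum>b\<le>M. if b = d - a \<and> a \<le> d then hcomp a p * hcomp (d - a) q else 0)"
  proof (intro sum.cong refl)
    fix a b
    have "homog (a + b) (hcomp a p * hcomp b q)" by (rule homog_mult[OF homog_hcomp homog_hcomp]) simp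
    then show "hcomp d (hcomp a p * hcomp b q)
        = (if b = d - a \<and> a \<le> d then hcomp a p * hcomp (d - a) q else 0)"
      by (auto simp: hcomp_homog)
  qed
  also have "\<dots> = (\<Sum>a\<le>M. if a \<le> d then hcomp a p * hcomp (d - a) q else 0)"
    by (intro sum.cong refl) (auto simp: M_def sum.delta')
  also have "\<dots> = (\<Sum>a\<le>d. hcomp a p * hcomp (d - a) q)"
    by (subst sum.inter_filter[symmetric]) (auto intro!: sum.cong simp: M_def)
  finally show ?thesis .
qed

definition dehomog :: "nat \<Rightarrow> bipoly \<Rightarrow> complex poly" where
  "dehomog d p = (\<Sum>i\<le>d. monom (coeff (coeff p i) (d - i)) i)"

lemma poly_dehomog: "poly (dehomog d p) t = eval2 (hcomp d p) 1 t"
  by (simp add: hcomp_def dehomog_def eval2_sum eval2_def poly_sum poly_monom)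

lemma coeff_dehomog: "coeff (dehomog d p) i = (if i \<le> d then coeff (coeff p i) (d - i) else 0)"
  unfolding dehomog_def coeff_sum by (auto simp: sum.delta)

lemma degree_dehomog: "degree (dehomog d p) \<le> d"
  by (rule degree_le) (simp add: coeff_dehomog)

lemma homog_eqI_eval:
  assumes hp: "homog d p" and hq: "homog d q" and A: "d < card A"
    and eval: "\<forall>t\<in>A. eval2 p 1 t = eval2 q 1 t"
  shows "p = q"
proof -
  have "dehomog d p = dehomog d q"
  proof (rule poly_eqI_degree[of A])
    fix t assume "t \<in> A"
    then show "poly (dehomog d p) t = poly (dehomog d q) t"
      using eval hcomp_homog[OF hp, of d] hcomp_homog[OF hq, of d] by (simp add: poly_dehomog)
  next
    show "degree (dehomog d p) < card A" "degree (dehomog d q) < card A"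
      using degree_dehomog[of d p] degree_dehomog[of d q] A by auto
  qed
  then have "hcomp d p = hcomp d q"
    by (intro poly_eqI) (metis coeff_dehomog coeff_hcomp le_add1 add_diff_cancel_left')
  then show ?thesis using hcomp_homog[OF hp, of d] hcomp_homog[OF hq, of d] by simp
qed

lemma homog_span:
  assumes "\<And>b. b \<in> S \<Longrightarrow> homog d b" "x \<in> cs.span S"
  shows "homog d x"
  using assms(2) by (induction rule: cs.span_induct_alt) (auto intro: homog_add homog_cscale assms(1))

section \<open>Graded pieces of generated subalgebras\<close>

lemma alg_gen_one: "1 \<in> alg_gen G"
  using alg_gen.const[of 1 G] by (simp add: one_pCons)

lemma alg_gen_zero: "0 \<in> alg_gen G"
  using alg_gen.const[of 0 G] by simp

lemma alg_gen_numeral: "numeral n \<in> alg_gen G"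
  using alg_gen.const[of "numeral n" G] by (simp add: numeral_poly)

lemma alg_gen_minus: "a \<in> alg_gen G \<Longrightarrow> - a \<in> alg_gen G"
proof -
  have "[:[:- 1:]:] = (- 1 :: bipoly)" by (simp add: one_pCons)
  then show "a \<in> alg_gen G \<Longrightarrow> - a \<in> alg_gen G"
    using alg_gen.mult[OF alg_gen.const[of "- 1"]] by simp
qed

lemma alg_gen_diff: "a \<in> alg_gen G \<Longrightarrow> b \<in> alg_gen G \<Longrightarrow> a - b \<in> alg_gen G"
  using alg_gen.add[OF _ alg_gen_minus] by (metis diff_conv_add_uminus)

lemma alg_gen_power: "a \<in> alg_gen G \<Longrightarrow> a ^ n \<in> alg_gen G"
  by (induction n) (auto intro: alg_gen_one alg_gen.mult)

definition gen_monomial :: "(nat \<Rightarrow> bipoly) \<Rightarrow> nat list \<Rightarrow> bipoly" where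
  "gen_monomial g ps = prod_list (map g ps)"

definition gen_monomials :: "(nat \<Rightarrow> bipoly) \<Rightarrow> nat set \<Rightarrow> nat \<Rightarrow> bipoly set" where
  "gen_monomials g I d = {gen_monomial g ps | ps. set ps \<subseteq> I \<and> sum_list ps = d}"

lemma gen_monomial_Nil: "gen_monomial g [] = 1"
  and gen_monomial_Cons: "gen_monomial g (i # ps) = g i * gen_monomial g ps"
  and gen_monomial_append: "gen_monomial g (ps @ qs) = gen_monomial g ps * gen_monomial g qs"
  by (simp_all add: gen_monomial_def)

lemma gen_monomial_insort: "gen_monomial g (insort i ps) = gen_monomial g (i # ps)"
  by (induction ps) (simp_all add: gen_monomial_Cons mult.left_commute)

lemma homog_gen_monomial:
  "(\<And>i. i \<in> set ps \<Longrightarrow> homog i (g i)) \<Longrightarrow> d = sum_list ps \<Longrightarrow> homog d (gen_monomial g ps)"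
proof (induction ps arbitrary: d)
  case Nil
  then show ?case by (simp add: gen_monomial_Nil homog_def coeff_1)
next
  case (Cons i ps)
  then show ?case using homog_mult[of i "g i" "sum_list ps"] by (simp add: gen_monomial_Cons)
qed

lemma gen_monomial_in_alg_gen: "set ps \<subseteq> I \<Longrightarrow> gen_monomial g ps \<in> alg_gen (g ` I)"
  by (induction ps)
     (auto simp: gen_monomial_Nil gen_monomial_Cons intro: alg_gen_one alg_gen.mult alg_gen.gen)

lemma gen_monomials_mult:
  assumes "x \<in> gen_monomials g I a" "y \<in> gen_monomials g I b"
  shows "x * y \<in> gen_monomials g I (a + b)"
proof -
  obtain ps qs where "x = gen_monomial g ps" "set ps \<subseteq> I" "sum_list ps = a"
    and "y = gen_monomial g qs" "set qs \<subseteq> I" "sum_list qs = b"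
    using assms unfolding gen_monomials_def by blast
  then show ?thesis
    unfolding gen_monomials_def by (intro CollectI exI[of _ "ps @ qs"]) (simp add: gen_monomial_append)
qed

lemma hcomp_alg_gen_in_span:
  assumes hg: "\<And>i. i \<in> I \<Longrightarrow> homog i (g i)" and p: "p \<in> alg_gen (g ` I)"
  shows "hcomp d p \<in> cs.span (gen_monomials g I d)"
  using p
proof (induction arbitrary: d rule: alg_gen.induct)
  case (const c)
  have "1 \<in> gen_monomials g I 0"
    unfolding gen_monomials_def by (auto simp: gen_monomial_Nil intro!: exI[of _ "[]"])
  then have "cscale c 1 \<in> cs.span (gen_monomials g I 0)"
    by (intro cs.span_scale cs.span_base)
  moreover have "cscale c 1 = [:[:c:]:]" by (simp add: cscale_def)
  ultimately show ?case
    using hcomp_homog[OF homog_const, of d c] by (simp add: cs.span_zero)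
next
  case (gen h)
  then obtain i where "i \<in> I" "h = g i" by auto
  moreover have "g i \<in> gen_monomials g I i" if "i \<in> I"
    unfolding gen_monomials_def using that
    by (auto simp: gen_monomial_Cons gen_monomial_Nil intro!: exI[of _ "[i]"])
  ultimately show ?case
    using hcomp_homog[OF hg, of i d] by (auto simp: cs.span_zero cs.span_base)
next
  case (add a b)
  then show ?case by (simp add: hcomp_add cs.span_add)
next
  case (mult a b)
  show ?case unfolding hcomp_mult
  proof (intro cs.span_sum)
    fix k assume "k \<in> {..d}"
    then have "x * y \<in> gen_monomials g I d"
      if "x \<in> gen_monomials g I k" "y \<in> gen_monomials g I (d - k)" for x y
      using gen_monomials_mult[OF that] by simp
    then show "hcomp k a * hcomp (d - k) b \<in> cs.span (gen_monomials g I d)"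
      by (rule span_mult_span[OF mult.IH])
  qed
qed

lemma span_graded_piece_alg_gen:
  assumes hg: "\<And>i. i \<in> I \<Longrightarrow> homog i (g i)"
  shows "cs.span (graded_piece (alg_gen (g ` I)) d) = cs.span (gen_monomials g I d)"
proof (rule cs.span_eq[THEN iffD2, OF conjI])
  show "graded_piece (alg_gen (g ` I)) d \<subseteq> cs.span (gen_monomials g I d)"
  proof
    fix p assume "p \<in> graded_piece (alg_gen (g ` I)) d"
    then have "p \<in> alg_gen (g ` I)" "hcomp d p = p"
      unfolding graded_piece_def using hcomp_homog by auto
    then show "p \<in> cs.span (gen_monomials g I d)"
      using hcomp_alg_gen_in_span[OF hg] by metis
  qed
  show "gen_monomials g I d \<subseteq> cs.span (graded_piece (alg_gen (g ` I)) d)"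
  proof
    fix x assume "x \<in> gen_monomials g I d"
    then obtain ps where "x = gen_monomial g ps" "set ps \<subseteq> I" "sum_list ps = d"
      unfolding gen_monomials_def by blast
    then have "x \<in> graded_piece (alg_gen (g ` I)) d"
      unfolding graded_piece_def
      using gen_monomial_in_alg_gen homog_gen_monomial[of ps g d] hg by (auto simp: subset_iff)
    then show "x \<in> cs.span (graded_piece (alg_gen (g ` I)) d)"
      by (rule cs.span_base)
  qed
qed

section \<open>Certificates for dimensions\<close>

lemma gen_monomials_subset_span:
  assumes I: "0 \<notin> I"
    and base: "[] \<in> set (parts 0)"
    and step: "\<And>d i rs. d \<le> N \<Longrightarrow> i \<in> I \<Longrightarrow> i \<le> d \<Longrightarrow> rs \<in> set (parts (d - i)) \<Longrightarrow>
                 gen_monomial g (i # rs) \<in> cs.span (gen_monomial g ` set (parts d))"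
    and "d \<le> N"
  shows "gen_monomials g I d \<subseteq> cs.span (gen_monomial g ` set (parts d))"
  using \<open>d \<le> N\<close>
proof (induction d rule: less_induct)
  case (less d)
  show ?case
  proof
    fix x assume "x \<in> gen_monomials g I d"
    then obtain ps where x: "x = gen_monomial g ps" and ps: "set ps \<subseteq> I" "sum_list ps = d"
      unfolding gen_monomials_def by blast
    show "x \<in> cs.span (gen_monomial g ` set (parts d))"
    proof (cases ps)
      case Nil
      have "gen_monomial g [] \<in> gen_monomial g ` set (parts 0)"
        using base by blast
      then show ?thesis using x ps Nil by (simp add: cs.span_base)
    next
      case (Cons i rs)
      with ps I have i: "i \<in> I" "i \<le> d" "0 < i" by (auto intro: Nat.gr0I)
      have "gen_monomial g rs \<in> gen_monomials g I (d - i)"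
        using ps Cons unfolding gen_monomials_def by auto
      moreover have "gen_monomials g I (d - i) \<subseteq> cs.span (gen_monomial g ` set (parts (d - i)))"
        using less.IH[of "d - i"] less.prems i by simp
      ultimately have "gen_monomial g rs \<in> cs.span (gen_monomial g ` set (parts (d - i)))"
        by blast
      then have "g i * gen_monomial g rs \<in> cs.span (gen_monomial g ` set (parts d))"
        by (rule span_mult_left) (use step less.prems i in \<open>auto simp: gen_monomial_Cons\<close>)
      then show ?thesis using x Cons by (simp add: gen_monomial_Cons)
    qed
  qed
qed

lemma in_span_if_eval:
  assumes hx: "homog d x" and hbs: "\<And>b. b \<in> set bs \<Longrightarrow> homog d b"
    and "k \<noteq> 0" and "d < card A"
    and eval: "\<forall>t\<in>A. k * eval2 x 1 t = (\<Sum>(c, b)\<leftarrow>zip cs bs. c * eval2 b 1 t)"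
  shows "x \<in> cs.span (set bs)"
proof -
  define y where "y = (\<Sum>(c, b)\<leftarrow>zip cs bs. cscale c b)"
  have y_span: "y \<in> cs.span (set bs)"
    unfolding y_def
  proof (induction cs bs rule: list_induct2')
    case (4 c cs b bs)
    then have "(\<Sum>(c, b)\<leftarrow>zip cs bs. cscale c b) \<in> cs.span (set (b # bs))"
      using cs.span_mono[of "set bs" "set (b # bs)"] by auto
    then show ?case by (simp add: cs.span_add cs.span_scale cs.span_base)
  qed (simp_all add: cs.span_zero)
  have "eval2 y 1 t = (\<Sum>(c, b)\<leftarrow>zip cs bs. c * eval2 b 1 t)" for t
    unfolding y_def by (induction cs bs rule: list_induct2') auto
  then have "cscale k x = y"
    using \<open>d < card A\<close> eval
    by (intro homog_eqI_eval[where d = d] homog_cscale hx homog_span[OF hbs y_span]) auto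
  then have "x = cscale (1 / k) y" using \<open>k \<noteq> 0\<close> by auto
  then show ?thesis using y_span by (simp add: cs.span_scale)
qed

definition eval_functional :: "complex list \<Rightarrow> complex list \<Rightarrow> bipoly \<Rightarrow> complex" where
  "eval_functional ts cs p = (\<Sum>(c, t)\<leftarrow>zip cs ts. c * eval2 p 1 t)"

lemma eval_functional_0: "eval_functional ts cs 0 = 0"
  and eval_functional_add:
    "eval_functional ts cs (p + q) = eval_functional ts cs p + eval_functional ts cs q"
  and eval_functional_cscale: "eval_functional ts cs (cscale c p) = c * eval_functional ts cs p"
  unfolding eval_functional_def by (induction cs ts rule: list_induct2') (auto simp: algebra_simps)

lemma eval_functional_sum:
  "eval_functional ts cs (sum f A) = (\<Sum>y\<in>A. eval_functional ts cs (f y))"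
  by (induction A rule: infinite_finite_induct) (auto simp: eval_functional_0 eval_functional_add)

lemma eval_functional_span_eq_0:
  assumes "x \<in> cs.span S" "\<And>s. s \<in> S \<Longrightarrow> eval_functional ts cs s = 0"
  shows "eval_functional ts cs x = 0"
  using assms(1)
  by (induction rule: cs.span_induct_alt)
     (auto simp: eval_functional_0 eval_functional_add eval_functional_cscale assms(2))

lemma independent_if_dual_functionals:
  assumes "length C = length bs"
    and dual: "map (\<lambda>cs. map (\<lambda>b. eval_functional ts cs b \<noteq> 0) bs) C
               = map (\<lambda>i. map (\<lambda>j. i = j) [0..<length bs]) [0..<length bs]"
  shows "cs.independent (set bs) \<and> distinct bs"
proof -
  have dual_nth: "eval_functional ts (C ! i) (bs ! j) \<noteq> 0 \<longleftrightarrow> i = j"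
    if "i < length bs" "j < length bs" for i j
    using arg_cong[OF dual, of "\<lambda>M. M ! i ! j"] that assms(1) by simp
  have "distinct bs"
    unfolding distinct_conv_nth using dual_nth by metis
  moreover have "cs.independent (set bs)"
  proof (rule cs.independent_if_scalars_zero)
    fix f x
    assume sum: "(\<Sum>x\<in>set bs. cscale (f x) x) = 0" and x: "x \<in> set bs"
    then obtain i where i: "i < length bs" "x = bs ! i" by (auto simp: in_set_conv_nth)
    let ?\<phi> = "eval_functional ts (C ! i)"
    have others: "?\<phi> y = 0" if "y \<in> set bs - {x}" for y
      using that i dual_nth by (auto simp: in_set_conv_nth)
    have "0 = ?\<phi> (\<Sum>x\<in>set bs. cscale (f x) x)"
      using sum eval_functional_0 by simp
    also have "\<dots> = (\<Sum>y\<in>set bs. f y * ?\<phi> y)"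
      by (simp add: eval_functional_sum eval_functional_cscale)
    also have "\<dots> = f x * ?\<phi> x"
      using x others by (simp add: sum.remove)
    finally show "f x = 0" using dual_nth[of i i] i by simp
  qed simp
  ultimately show ?thesis by simp
qed

lemma dim_eq_length_basis:
  assumes "set bs \<subseteq> cs.span S" "S \<subseteq> cs.span (set bs)" "cs.independent (set bs)" "distinct bs"
  shows "cs.dim S = length bs"
proof -
  have "cs.dim S = cs.dim (set bs)"
    using assms(1,2) by (intro cs.span_eq_dim) (simp add: cs.span_eq)
  also have "\<dots> = length bs"
    using cs.dim_unique[OF order_refl cs.span_superset assms(3)] assms(4) by (simp add: distinct_card)
  finally show ?thesis .
qed

section \<open>The Hilbert series of R32\<close>

definition R32_basis_parts :: "nat \<Rightarrow> nat list list" where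
  "R32_basis_parts d =
    [[[]], [], [[2]], [[3]], [[2,2], [4]], [[2,3], [5]], [[2,2,2], [2,4], [3,3], [6]],
     [[2,2,3], [2,5], [3,4]], [[2,2,2,2], [2,2,4], [2,3,3], [2,6], [3,5], [4,4]],
     [[2,2,2,3], [2,2,5], [2,3,4], [3,3,3], [3,6], [4,5]],
     [[2,2,2,2,2], [2,2,2,4], [2,2,3,3], [2,2,6], [2,3,5], [2,4,4], [3,3,4], [4,6]]] ! d"

definition R32_basis :: "nat \<Rightarrow> bipoly list" where
  "R32_basis d = map (gen_monomial P32) (R32_basis_parts d)"

lemma R32_basis_parts_partition:
  assumes "d \<le> 10" "ps \<in> set (R32_basis_parts d)"
  shows "set ps \<subseteq> {2..}" "sum_list ps = d"
proof -
  have "\<forall>d\<in>set [0, 1, 2, 3, 4, 5, 6, 7, 8, 9, 10]. \<forall>ps\<in>set (R32_basis_parts d).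
          set ps \<subseteq> {2..} \<and> sum_list ps = d"
    by (simp add: R32_basis_parts_def)
  moreover have "d \<in> set [0, 1, 2, 3, 4, 5, 6, 7, 8, 9, 10]"
    using assms(1) by (simp, presburger)
  ultimately show "set ps \<subseteq> {2..}" "sum_list ps = d"
    using assms(2) by auto
qed

lemma R32_basis_subset: "d \<le> 10 \<Longrightarrow> set (R32_basis d) \<subseteq> gen_monomials P32 {2..} d"
  unfolding R32_basis_def gen_monomials_def using R32_basis_parts_partition by fastforce

lemma homog_R32_basis: "d \<le> 10 \<Longrightarrow> b \<in> set (R32_basis d) \<Longrightarrow> homog d b"
  using R32_basis_subset unfolding gen_monomials_def
  by (fastforce intro: homog_gen_monomial homog_P32)

lemma in_span_R32_basis_if_eval:
  assumes "d \<le> 10" "sum_list ps = d" "k \<noteq> 0"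
    and "\<forall>t\<in>{0, 1, 2, 3, 4, 5, 6, 7, 8, 9, 10}. k * eval2 (gen_monomial P32 ps) 1 t
           = (\<Sum>(c, b)\<leftarrow>zip cs (R32_basis d). c * eval2 b 1 t)"
  shows "gen_monomial P32 ps \<in> cs.span (set (R32_basis d))"
  using assms
  by (intro in_span_if_eval[where k = k and cs = cs and A = "{0, 1, 2, 3, 4, 5, 6, 7, 8, 9, 10}"]
        homog_gen_monomial homog_R32_basis homog_P32) auto

lemma R32_basis_relations:
  "gen_monomial P32 [7] \<in> cs.span (set (R32_basis 7))"
  "gen_monomial P32 [8] \<in> cs.span (set (R32_basis 8))"
  "gen_monomial P32 [2,7] \<in> cs.span (set (R32_basis 9))"
  "gen_monomial P32 [9] \<in> cs.span (set (R32_basis 9))"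
  "gen_monomial P32 [2,8] \<in> cs.span (set (R32_basis 10))"
  "gen_monomial P32 [3,7] \<in> cs.span (set (R32_basis 10))"
  "gen_monomial P32 [5,5] \<in> cs.span (set (R32_basis 10))"
  "gen_monomial P32 [10] \<in> cs.span (set (R32_basis 10))"
  apply (rule in_span_R32_basis_if_eval[where k = 120 and cs = "[-35, 84, 70]"];
      simp add: R32_basis_def R32_basis_parts_def gen_monomial_def)
  apply (rule in_span_R32_basis_if_eval[where k = 720 and cs = "[15, -180, -160, 480, 384, 180]"];
      simp add: R32_basis_def R32_basis_parts_def gen_monomial_def)
  apply (rule in_span_R32_basis_if_eval[where k = 120 and cs = "[-35, 84, 70, 0, 0, 0]"];
      simp add: R32_basis_def R32_basis_parts_def gen_monomial_def)
  apply (rule in_span_R32_basis_if_eval[where k = 360 and cs = "[-45, 81, 0, -20, 180, 162]"];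
      simp add: R32_basis_def R32_basis_parts_def gen_monomial_def)
  apply (rule in_span_R32_basis_if_eval[where k = 720 and cs = "[15, -180, -160, 480, 384, 180, 0, 0]"];
      simp add: R32_basis_def R32_basis_parts_def gen_monomial_def)
  apply (rule in_span_R32_basis_if_eval[where k = 120 and cs = "[0, 0, -35, 0, 84, 0, 70, 0]"];
      simp add: R32_basis_def R32_basis_parts_def gen_monomial_def)
  apply (rule in_span_R32_basis_if_eval[where k = 1440 and cs = "[-5, 80, -320, -120, 1344, -300, 0, 720]"];
      simp add: R32_basis_def R32_basis_parts_def gen_monomial_def)
  apply (rule in_span_R32_basis_if_eval[where k = 3600 and cs = "[35, -335, -910, 690, 1872, -150, 500, 1860]"];
      simp add: R32_basis_def R32_basis_parts_def gen_monomial_def)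
  done

lemma R32_basis_mult_generator:
  "\<forall>d\<in>set [2..<11]. \<forall>i\<in>set [2..<d + 1]. \<forall>rs\<in>set (R32_basis_parts (d - i)).
     insort i rs \<in> set (R32_basis_parts d)
     \<or> gen_monomial P32 (insort i rs) \<in> cs.span (set (R32_basis d))"
  by (simp add: R32_basis_parts_def R32_basis_relations del: set_upt)

lemma R32_monomials_subset_span:
  assumes "d \<le> 10"
  shows "gen_monomials P32 {2..} d \<subseteq> cs.span (set (R32_basis d))"
  unfolding R32_basis_def set_map
proof (rule gen_monomials_subset_span[where N = 10, OF _ _ _ assms])
  show "[] \<in> set (R32_basis_parts 0)" by (simp add: R32_basis_parts_def)
next
  fix d i rs
  assume "d \<le> 10" "i \<in> {2..}" "i \<le> d" "rs \<in> set (R32_basis_parts (d - i))"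
  then have "d \<in> set [2..<11]" "i \<in> set [2..<d + 1]" by auto
  then have "insort i rs \<in> set (R32_basis_parts d)
      \<or> gen_monomial P32 (insort i rs) \<in> cs.span (set (R32_basis d))"
    using R32_basis_mult_generator \<open>rs \<in> _\<close> by blast
  then show "gen_monomial P32 (i # rs) \<in> cs.span (gen_monomial P32 ` set (R32_basis_parts d))"
    by (auto simp: R32_basis_def gen_monomial_insort[symmetric] intro: cs.span_base)
qed simp

text \<open>
  Row i of \<open>R32_dual_coeffs d\<close> holds the coefficients of a combination of evaluations at the
  points \<open>(1, t)\<close>, \<open>t \<in> R32_dual_points d\<close>, that vanishes exactly on the basis elements other
  than the i-th one.
\<close>

definition R32_dual_points :: "nat \<Rightarrow> complex list" where
  "R32_dual_points d =
    [[0], [], [0], [0], [0, -2], [0, -2], [1, -1, 2, -2], [1, -2, -4], [0, 1, -1, 2, -2, -3],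
     [0, 1, 2, -2, -3, -4], [0, 1, -1, 2, -2, 3, -3, -4]] ! d"

definition R32_dual_coeffs :: "nat \<Rightarrow> complex list list" where
  "R32_dual_coeffs d =
    [[[1]],
     [],
     [[1]],
     [[-1]],
     [[-3, 7], [1, -1]],
     [[1, -4], [-1, 2]],
     [[23, 1461, -3, -113], [-39, -2165, 5, 255], [22, -510, -3, 95], [1, 675, 0, -100]],
     [[2, -350, -1], [0, 0, 1], [-4, 250, -3]],
     [[-4500, -409, 36120, 33, 595, -63], [7020, 631, -35400, -51, -745, 81],
      [-7200, -589, -2100, 48, 2800, -63], [180, -46, 6720, 3, 25, -18],
      [6300, 559, -6300, -45, -1375, 45], [-2700, -176, 1200, 15, 125, 0]],
     [[4050, -6558, 325, 204225, -9450, 266], [-59850, -1387, 95, -10925, 855, -26],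
      [61650, 7402, -395, -180175, 7470, -214], [4050, 266, -15, -7475, 270, -6],
      [-16650, -962, 55, 17675, -630, 14], [3150, 73, -5, 575, -45, 2]],
     [[-274800, -74203, 1927275, 4430, 311122, -147, -10605, 280],
      [1827000, 504315, -8128575, -30100, -1974924, 999, 67725, -1832],
      [24600, 19211, -106575, -1150, 14686, 39, 525, -32],
      [-65100, -31822, 702450, 1925, 151291, -66, -5250, 136],
      [136500, 4207, -1362375, -350, -575890, 15, 15225, -316],
      [-1806000, -467411, 2968875, 27790, 1494290, -915, -51765, 1496],
      [-12600, -4417, 27825, 266, 16534, -9, -567, 16],
      [24000, 7535, -42375, -450, -23390, 15, 825, -24]]] ! d"

lemma R32_basis_independent:
  assumes "d \<le> 10"
  shows "cs.independent (set (R32_basis d)) \<and> distinct (R32_basis d)"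
proof -
  have "\<forall>d\<in>set [0, 1, 2, 3, 4, 5, 6, 7, 8, 9, 10].
          length (R32_dual_coeffs d) = length (R32_basis d) \<and>
          map (\<lambda>cs. map (\<lambda>b. eval_functional (R32_dual_points d) cs b \<noteq> 0) (R32_basis d))
              (R32_dual_coeffs d)
          = map (\<lambda>i. map (\<lambda>j. i = j) [0..<length (R32_basis d)]) [0..<length (R32_basis d)]"
    by (simp add: R32_dual_coeffs_def R32_dual_points_def R32_basis_def R32_basis_parts_def
        eval_functional_def gen_monomial_def)
  moreover have "d \<in> set [0, 1, 2, 3, 4, 5, 6, 7, 8, 9, 10]"
    using assms by (simp, presburger)
  ultimately show ?thesis
    using independent_if_dual_functionals by blast
qed

lemma dim_graded_piece_R32:
  assumes "d \<le> 10"
  shows "cs.dim (graded_piece R32 d) = length (R32_basis_parts d)"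
proof -
  have "cs.dim (graded_piece R32 d) = cs.dim (gen_monomials P32 {2..} d)"
    unfolding R32_def by (intro cs.span_eq_dim span_graded_piece_alg_gen homog_P32)
  also have "\<dots> = length (R32_basis d)"
    using R32_basis_independent[OF assms] R32_monomials_subset_span[OF assms]
      R32_basis_subset[OF assms] cs.span_superset
    by (intro dim_eq_length_basis) auto
  finally show ?thesis by (simp add: R32_basis_def)
qed

lemma hilbert_series_R32_nth:
  "d \<le> 10 \<Longrightarrow> fps_nth (hilbert_series R32) d = int (length (R32_basis_parts d))"
  by (simp add: hilbert_series_def dim_graded_piece_R32)

lemma fps_nth_mult_1_minus_X2_1_minus_X3:
  fixes H :: "int fps"
  shows "fps_nth (H * ((1 - fps_X ^ 2) * (1 - fps_X ^ 3))) n =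
    fps_nth H n - (if n < 2 then 0 else fps_nth H (n - 2)) - (if n < 3 then 0 else fps_nth H (n - 3))
    + (if n < 5 then 0 else fps_nth H (n - 5))"
proof -
  have "H * ((1 - fps_X ^ 2) * (1 - fps_X ^ 3)) = H - H * fps_X ^ 2 - H * fps_X ^ 3 + H * fps_X ^ 5"
    by (simp add: algebra_simps flip: power_add)
  then show ?thesis by (simp add: fps_X_power_mult_right_nth)
qed

lemma hilbert_numerator_R32:
  "map (fps_nth (hilbert_series R32 * ((1 - fps_X ^ 2) * (1 - fps_X ^ 3)))) [0..<11]
     = [1, 0, 0, 0, 1, 1, 1, 0, 1, 1, 1]"
proof -
  have "[0..<11] = [0, 1, 2, 3, 4, 5, 6, 7, 8, 9, 10 :: nat]"
    by (simp add: upt_rec)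
  then show ?thesis
    by (simp add: fps_nth_mult_1_minus_X2_1_minus_X3 hilbert_series_R32_nth R32_basis_parts_def)
qed

section \<open>Depth and Krull dimension of R32\<close>

definition const_term :: "bipoly \<Rightarrow> complex" where
  "const_term p = coeff (coeff p 0) 0"

lemma const_term_add: "const_term (p + q) = const_term p + const_term q"
  and const_term_mult: "const_term (p * q) = const_term p * const_term q"
  and const_term_const: "const_term [:[:c:]:] = c"
  by (simp_all add: const_term_def coeff_mult_0)

lemma const_term_homog: "homog d p \<Longrightarrow> 0 < d \<Longrightarrow> const_term p = 0"
  unfolding homog_def const_term_def by fastforce

lemma mult_alg_gen_minus_const_term:
  assumes gen: "\<And>g. g \<in> G \<Longrightarrow> w * (g - [:[:const_term g:]:]) \<in> alg_gen G"
    and "p \<in> alg_gen G"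
  shows "w * (p - [:[:const_term p:]:]) \<in> alg_gen G"
  using \<open>p \<in> alg_gen G\<close>
proof (induction rule: alg_gen.induct)
  case (const c)
  then show ?case by (simp add: const_term_const alg_gen_zero)
next
  case (gen g)
  then show ?case by (rule assms(1))
next
  case (add a b)
  have split: "[:[:const_term (a + b):]:] = [:[:const_term a:]:] + [:[:const_term b:]:]"
    by (simp add: const_term_add)
  have "w * (a + b - [:[:const_term (a + b):]:])
      = w * (a - [:[:const_term a:]:]) + w * (b - [:[:const_term b:]:])"
    unfolding split by (simp add: algebra_simps flip: smult_add_left)
  then show ?case using add.IH by (simp add: alg_gen.add)
next
  case (mult a b)
  have "w * (a * b - [:[:const_term (a * b):]:])
      = w * (a - [:[:const_term a:]:]) * b + [:[:const_term a:]:] * (w * (b - [:[:const_term b:]:]))"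
    by (simp add: const_term_mult algebra_simps)
  moreover have "w * (a - [:[:const_term a:]:]) * b \<in> alg_gen G"
    by (rule alg_gen.mult[OF mult.IH(1) mult.hyps(2)])
  moreover have "[:[:const_term a:]:] * (w * (b - [:[:const_term b:]:])) \<in> alg_gen G"
    by (rule alg_gen.mult[OF alg_gen.const mult.IH(2)])
  ultimately show ?case by (simp only: alg_gen.add)
qed

definition L32 :: bipoly where "L32 = - 3 * X_var - 2 * Y_var"

lemma homog_L32: "homog 1 L32"
  unfolding L32_def by (rule homog_intros | simp)+

definition W :: bipoly where
  "W = 97200 * Y_var ^ 7 + 1321920 * X_var * Y_var ^ 6 + 6930360 * X_var ^ 2 * Y_var ^ 5
     + 19167840 * X_var ^ 3 * Y_var ^ 4 + 29937600 * X_var ^ 4 * Y_var ^ 3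
     + 26282880 * X_var ^ 5 * Y_var ^ 2 + 12023640 * X_var ^ 6 * Y_var + 2216160 * X_var ^ 7"
lemma homog_W: "homog 7 W"
  unfolding W_def by (rule homog_intros | simp)+

definition M4 :: bipoly where "M4 = 2430 * P32 2 ^ 2 - 14580 * P32 4"
definition M5 :: bipoly where "M5 = 11340 * P32 5 - 5940 * P32 2 * P32 3"
definition M6 :: bipoly where
  "M6 = 2160 * P32 2 * P32 4 + 4860 * P32 6 - 495 * P32 2 ^ 3 - 1350 * P32 3 ^ 2"
definition M8 :: bipoly where
  "M8 = 225 * P32 2 ^ 2 * P32 4 + 2095 * P32 2 * P32 3 ^ 2 + 1440 * P32 4 ^ 2 + 3960 * P32 8
      - 3450 * P32 2 * P32 6 - 4002 * P32 3 * P32 5"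

lemma homog_M: "homog 4 M4" "homog 5 M5" "homog 6 M6" "homog 8 M8"
  unfolding M4_def M5_def M6_def M8_def by (rule homog_intros homog_P32 | simp)+

lemma W_mult_linear_form:
  assumes "l \<in> {X_var, Y_var, L32}"
  shows "M4 * l ^ 4 + M5 * l ^ 3 + M6 * l ^ 2 + M8 = W * l"
proof -
  have hl: "homog 1 l" using assms homog_X homog_Y homog_L32 by blast
  have "homog 8 (M4 * l ^ 4 + M5 * l ^ 3 + M6 * l ^ 2 + M8)" "homog 8 (W * l)"
    by (rule homog_intros homog_M homog_W hl | simp)+
  moreover have "card {0, 1, 2, 3, 4, 5, 6, 7, 8 :: complex} = 9" by simp
  ultimately show ?thesis
    using assms by (intro homog_eqI_eval[where A = "{0, 1, 2, 3, 4, 5, 6, 7, 8}"])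
      (auto simp: M4_def M5_def M6_def M8_def W_def L32_def)
qed

lemma P32_eq: "P32 m = 3 * X_var ^ m + 2 * Y_var ^ m + L32 ^ m"
  by (simp add: P32_def L32_def)

lemma W_mult_P32:
  "W * P32 (Suc n) = M4 * P32 (n + 4) + M5 * P32 (n + 3) + M6 * P32 (n + 2) + M8 * P32 n"
proof -
  have "M4 * P32 (n + 4) + M5 * P32 (n + 3) + M6 * P32 (n + 2) + M8 * P32 n =
     3 * X_var ^ n * (M4 * X_var ^ 4 + M5 * X_var ^ 3 + M6 * X_var ^ 2 + M8)
   + 2 * Y_var ^ n * (M4 * Y_var ^ 4 + M5 * Y_var ^ 3 + M6 * Y_var ^ 2 + M8)
   + L32 ^ n * (M4 * L32 ^ 4 + M5 * L32 ^ 3 + M6 * L32 ^ 2 + M8)"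
    unfolding P32_eq power_add by (simp add: algebra_simps)
  also have "\<dots> = 3 * X_var ^ n * (W * X_var) + 2 * Y_var ^ n * (W * Y_var) + L32 ^ n * (W * L32)"
    by (simp only: W_mult_linear_form insert_iff simp_thms)
  also have "\<dots> = W * P32 (Suc n)"
    unfolding P32_eq by (simp add: algebra_simps)
  finally show ?thesis by simp
qed

lemma P32_in_R32: "P32 n \<in> R32"
proof -
  consider "n = 0" | "n = 1" | "2 \<le> n" by linarith
  then show ?thesis
  proof cases
    case 1
    have "P32 0 = 6" by (simp add: P32_def)
    then show ?thesis unfolding R32_def using 1 by (simp add: alg_gen_numeral)
  next
    case 2
    then show ?thesis unfolding R32_def using alg_gen_zero by (simp add: P32_def)
  qed (auto simp: R32_def intro: alg_gen.gen)
qed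

lemma W_mult_irrelevant_R32: "p \<in> irrelevant R32 \<Longrightarrow> W * p \<in> R32"
proof -
  have "W * (g - [:[:const_term g:]:]) \<in> R32" if gen: "g \<in> P32 ` {2..}" for g
  proof -
    obtain i where "g = P32 i" "2 \<le> i" using gen by auto
    then obtain n where g: "g = P32 (Suc n)" and "2 \<le> Suc n" by (cases i) auto
    then have "const_term g = 0" using const_term_homog[OF homog_P32, of "Suc n"] by simp
    moreover have "M4 \<in> R32" "M5 \<in> R32" "M6 \<in> R32" "M8 \<in> R32"
      unfolding M4_def M5_def M6_def M8_def R32_def
      by (intro alg_gen.add alg_gen.mult alg_gen_diff alg_gen_power alg_gen_numeral
          P32_in_R32[unfolded R32_def])+
    ultimately have "W * g \<in> R32"
      unfolding g W_mult_P32 R32_def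
      by (intro alg_gen.add alg_gen.mult P32_in_R32[unfolded R32_def])
    then show ?thesis using \<open>const_term g = 0\<close> by simp
  qed
  then show "p \<in> irrelevant R32 \<Longrightarrow> W * p \<in> R32"
    using mult_alg_gen_minus_const_term[of "P32 ` {2..}" W p]
    unfolding irrelevant_def R32_def const_term_def by auto
qed

lemma W_not_in_R32: "W \<notin> R32"
proof
  assume "W \<in> R32"
  with homog_W have "W \<in> cs.span (gen_monomials P32 {2..} 7)"
    using hcomp_alg_gen_in_span[OF homog_P32, of W "{2..}" 7] hcomp_homog[of 7 W 7]
    unfolding R32_def by simp
  moreover have "cs.span (gen_monomials P32 {2..} 7) \<subseteq> cs.span (set (R32_basis 7))"
    using cs.span_mono[OF R32_monomials_subset_span[of 7]] by (simp add: cs.span_span)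
  ultimately have "W \<in> cs.span (set (R32_basis 7))" by blast
  moreover have "eval_functional [0, 1, 2, 3] [760, 516, -80, 5] b = 0"
    if "b \<in> set (R32_basis 7)" for b
    using that by (auto simp: R32_basis_def R32_basis_parts_def eval_functional_def gen_monomial_def)
  ultimately have "eval_functional [0, 1, 2, 3] [760, 516, -80, 5] W = 0"
    by (rule eval_functional_span_eq_0)
  moreover have "eval_functional [0, 1, 2, 3] [760, 516, -80, 5] W \<noteq> 0"
    by (simp add: W_def eval_functional_def)
  ultimately show False by simp
qed

lemma gen_ideal_Nil: "a \<in> A \<Longrightarrow> gen_ideal A [] = {0}"
  unfolding gen_ideal_def by auto

lemma gen_ideal_single: "gen_ideal A [f] = {r * f | r. r \<in> A}"
proof (intro equalityI subsetI)
  fix x assume "x \<in> {r * f | r. r \<in> A}"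
  then obtain r where "r \<in> A" "x = r * f" by blast
  then show "x \<in> gen_ideal A [f]"
    unfolding gen_ideal_def by (intro CollectI exI[of _ "\<lambda>_. r"]) simp
qed (auto simp: gen_ideal_def)

lemma regular_seq_R32_length: "regular_seq R32 fs \<Longrightarrow> length fs \<le> 1"
proof (rule ccontr)
  assume reg: "regular_seq R32 fs" and "\<not> length fs \<le> 1"
  then have len: "1 < length fs" by simp
  let ?f1 = "fs ! 0" and ?f2 = "fs ! 1"
  have "set fs \<subseteq> irrelevant R32" using reg unfolding regular_seq_def by blast
  then have irr: "?f1 \<in> irrelevant R32" "?f2 \<in> irrelevant R32"
    using len by (auto intro!: subsetD[OF _ nth_mem])
  have regular: "\<And>i a. i < length fs \<Longrightarrow> a \<in> R32 \<Longrightarrow> a * fs ! i \<in> gen_ideal R32 (take i fs)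
      \<Longrightarrow> a \<in> gen_ideal R32 (take i fs)"
    using reg unfolding regular_seq_def by blast
  have "?f1 \<noteq> 0"
  proof
    have one: "1 \<in> R32" unfolding R32_def by (rule alg_gen_one)
    have ideal_0: "gen_ideal R32 [] = {0}" by (rule gen_ideal_Nil[OF one])
    assume "?f1 = 0"
    then have "1 * ?f1 \<in> gen_ideal R32 (take 0 fs)" by (simp add: ideal_0)
    then have "1 \<in> gen_ideal R32 (take 0 fs)" using regular[OF _ one, of 0] len by (cases fs) auto
    then show False by (simp add: ideal_0)
  qed
  have take1: "take 1 fs = [?f1]" using len by (cases fs) auto
  have "W * ?f1 * ?f2 = (W * ?f2) * ?f1" by (simp add: ac_simps)
  then have "W * ?f1 * ?f2 \<in> gen_ideal R32 (take 1 fs)"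
    unfolding take1 gen_ideal_single using W_mult_irrelevant_R32[OF irr(2)] by blast
  then have "W * ?f1 \<in> gen_ideal R32 (take 1 fs)"
    using regular[of 1 "W * ?f1"] len W_mult_irrelevant_R32[OF irr(1)] by auto
  then obtain r where "r \<in> R32" "W * ?f1 = r * ?f1"
    unfolding take1 gen_ideal_single by blast
  then show False using \<open>?f1 \<noteq> 0\<close> W_not_in_R32 by simp
qed

lemma depth_R32_le_1: "depth R32 \<le> 1"
  unfolding depth_def
  using regular_seq_R32_length by (auto intro!: Sup_least simp: one_enat_def)

definition vanishing_at_y0 :: "bipoly set" where
  "vanishing_at_y0 = {p \<in> R32. coeff p 0 = 0}"

lemma prime_in_R32_kernel:
  fixes c :: "bipoly \<Rightarrow> 'a :: idom"
  assumes "\<And>p q. c (p * q) = c p * c q" "\<And>p q. c (p + q) = c p + c q" "c 1 \<noteq> 0"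
  shows "prime_in R32 {p \<in> R32. c p = 0}"
proof -
  have R: "1 \<in> R32" "0 \<in> R32" "\<And>a b. a \<in> R32 \<Longrightarrow> b \<in> R32 \<Longrightarrow> a + b \<in> R32"
    "\<And>a b. a \<in> R32 \<Longrightarrow> b \<in> R32 \<Longrightarrow> a * b \<in> R32"
    unfolding R32_def by (rule alg_gen_one alg_gen_zero alg_gen.add alg_gen.mult; assumption)+
  have "c 0 = 0" using assms(2)[of 0 0] by (metis add.right_neutral add_left_cancel)
  then show ?thesis
    using R assms unfolding prime_in_def ideal_in_def by auto
qed

lemma prime_in_R32_zero: "prime_in R32 {0}"
proof -
  have "{p \<in> R32. p = 0} = {0}"
    using alg_gen_zero unfolding R32_def by auto
  then show ?thesis using prime_in_R32_kernel[of id] by simp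
qed

lemma prime_in_R32_vanishing_at_y0: "prime_in R32 vanishing_at_y0"
  unfolding vanishing_at_y0_def by (rule prime_in_R32_kernel) (simp_all add: coeff_mult_0)

lemma prime_in_R32_irrelevant: "prime_in R32 (irrelevant R32)"
  unfolding irrelevant_def
  by (rule prime_in_R32_kernel[where c = "\<lambda>p. coeff (coeff p 0) 0"]) (simp_all add: coeff_mult_0)

lemma zero_psubset_vanishing_at_y0: "{0} \<subset> vanishing_at_y0"
proof -
  define E where "E = P32 2 ^ 3 - 3 * P32 3 ^ 2"
  have "E \<in> R32"
    unfolding E_def R32_def by (intro alg_gen_diff alg_gen.mult alg_gen_power alg_gen_numeral alg_gen.gen) auto
  moreover have "coeff E 0 = 0"
    using poly_all_0_iff_0[of "coeff E 0"] eval2_y0[of E]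
    by (simp add: E_def algebra_simps power2_eq_square power3_eq_cube)
  moreover have "E \<noteq> 0"
  proof
    assume "E = 0"
    then have "eval2 E 1 1 = 0" by simp
    then show False by (simp add: E_def)
  qed
  ultimately show ?thesis
    using alg_gen_zero[of "P32 ` {2..}"] unfolding vanishing_at_y0_def R32_def by auto
qed

lemma vanishing_at_y0_psubset_irrelevant: "vanishing_at_y0 \<subset> irrelevant R32"
proof -
  have "P32 2 \<in> irrelevant R32"
    using P32_in_R32 const_term_homog[OF homog_P32, of 2] unfolding irrelevant_def const_term_def by simp
  moreover have "P32 2 \<notin> vanishing_at_y0"
    using eval2_y0[of "P32 2" 1] unfolding vanishing_at_y0_def by auto
  ultimately show ?thesis
    unfolding vanishing_at_y0_def irrelevant_def by auto
qed

lemma krull_dim_R32_ge_2: "2 \<le> krull_dim R32"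
proof -
  define ch where "ch = (\<lambda>i::nat. if i = 0 then {0} else if i = 1 then vanishing_at_y0 else irrelevant R32)"
  have "(\<forall>i\<le>2. prime_in R32 (ch i)) \<and> (\<forall>i<2. ch i \<subset> ch (Suc i))"
    using prime_in_R32_zero prime_in_R32_vanishing_at_y0 prime_in_R32_irrelevant
      zero_psubset_vanishing_at_y0 vanishing_at_y0_psubset_irrelevant
    unfolding ch_def by (auto simp: less_Suc_eq)
  then have "enat 2 \<le> krull_dim R32"
    unfolding krull_dim_def by (intro Sup_upper) blast
  then show ?thesis by (simp add: numeral_eq_enat)
qed

theorem proposition5p12:
  fixes q :: "int fps"
  assumes "q = hilbert_series R32 * ((1 - fps_X ^ 2) * (1 - fps_X ^ 3))"
  shows "map (fps_nth q) [0..<11] = [1, 0, 0, 0, 1, 1, 1, 0, 1, 1, 1]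
         \<and> \<not> cohen_macaulay R32"
proof
  show "map (fps_nth q) [0..<11] = [1, 0, 0, 0, 1, 1, 1, 0, 1, 1, 1]"
    using hilbert_numerator_R32 assms by simp
  have "(1::enat) < 2" by (simp add: one_enat_def numeral_eq_enat)
  then have "depth R32 < krull_dim R32"
    using depth_R32_le_1 krull_dim_R32_ge_2 by (meson le_less_trans less_le_trans)
  then show "\<not> cohen_macaulay R32"
    unfolding cohen_macaulay_def by simp
qed

end
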